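(* Let $q$ be a prime power, $r\geq1$, $\delta\geq2$ integers and $R=r+\delta-1$. Let $a_1,\dots,a_\ell\in\mathbb{F}_q^*$ and $h=\prod_{i=1}^{\ell}(T^R-a_i)$. Let $P\in\mathbb{F}_q[T]$ be monic irreducible of degree $m$ with $P\equiv1\pmod h$, let $\alpha\in\mathbb{F}_{q^m}$ be a root of $P$, and let $\bar\phi:\mathbb{F}_q[T]\to\mathbb{F}_{q^m}\{\tau\}$ be the Drinfeld module with $\bar\phi_T=\alpha+\tau$ (the reduction modulo $P$ of the Carlitz module $\phi_T=T+\tau$). Then for every $i\in\{1,\ldots,\ell\}$, $\dim_{\mathbb{F}_q}\bar\phi[T^R-a_i]=R$.
   Context: For a field $K\supseteq\mathbb{F}_q$, $K\{\tau\}$ is the twisted polynomial ring with $(a\tau^i)(b\tau^j)=ab^{q^i}\tau^{i+j}$, and a Drinfeld module $\bar\phi$ is an $\mathbb{F}_q$-algebra homomorphism $\mathbb{F}_q[T]\to K\{\tau\}$ determined by $\bar\phi_T$. For $a\in\mathbb{F}_q[T]$, $\bar\phi_a(x)$ is the $q$-linearized polynomial obtained from $\bar\phi_a$ by replacing $\tau^i$ with $x^{q^i}$, and $\bar\phi[a]=\{\beta\in\overline{\mathbb{F}}_{q}:\bar\phi_a(\beta)=0\}$ is the set of $a$-torsion points, an $\mathbb{F}_q$-vector space. *)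

theory Defs
  imports "HOL-Computational_Algebra.Polynomial" "HOL-Algebra.Algebraic_Closure_Type" "HOL-Library.Cardinality"
begin

text \<open>Elements of the twisted polynomial ring K{tau} are represented by their
  coefficient sequences, i.e. as polynomials f with coeff f i the coefficient of tau^i.\<close>

definition tw_mult :: "nat \<Rightarrow> 'a::comm_ring_1 poly \<Rightarrow> 'a poly \<Rightarrow> 'a poly" where
  "tw_mult q f g =
     (\<Sum>i\<le>degree f. \<Sum>j\<le>degree g. monom (coeff f i * coeff g j ^ (q ^ i)) (i + j))"

definition tw_pow :: "nat \<Rightarrow> 'a::comm_ring_1 poly \<Rightarrow> nat \<Rightarrow> 'a poly" where
  "tw_pow q f n = ((tw_mult q f) ^^ n) 1"

definition drinfeld_phi ::
  "('q::{finite,field}) alg_closure poly \<Rightarrow> 'q poly \<Rightarrow> 'q alg_closure poly" where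
  "drinfeld_phi phiT a =
     (\<Sum>k\<le>degree a. smult (to_ac (coeff a k)) (tw_pow CARD('q) phiT k))"

definition lin_eval :: "nat \<Rightarrow> 'a::comm_ring_1 poly \<Rightarrow> 'a \<Rightarrow> 'a" where
  "lin_eval q f x = (\<Sum>i\<le>degree f. coeff f i * x ^ (q ^ i))"

definition torsion ::
  "('q::{finite,field}) alg_closure poly \<Rightarrow> 'q poly \<Rightarrow> 'q alg_closure set" where
  "torsion phiT a = {\<beta>. lin_eval CARD('q) (drinfeld_phi phiT a) \<beta> = 0}"

definition fq_span :: "('q::{finite,field}) alg_closure set \<Rightarrow> 'q alg_closure set" where
  "fq_span B = {\<Sum>b\<in>B. to_ac (c b) * b | c :: 'q alg_closure \<Rightarrow> 'q. True}"

definition fq_indep :: "('q::{finite,field}) alg_closure set \<Rightarrow> bool" where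
  "fq_indep B \<longleftrightarrow> (\<forall>c :: 'q alg_closure \<Rightarrow> 'q.
      (\<Sum>b\<in>B. to_ac (c b) * b) = 0 \<longrightarrow> (\<forall>b\<in>B. c b = 0))"

definition fq_dim_eq :: "('q::{finite,field}) alg_closure set \<Rightarrow> nat \<Rightarrow> bool" where
  "fq_dim_eq V n \<longleftrightarrow>
     (\<exists>B. finite B \<and> card B = n \<and> fq_indep B \<and> fq_span B = V)"

end

theory Submission
  imports Defs
begin

text \<open>
  For \<open>g = T\<^sup>R - c\<close> with \<open>R \<ge> 1\<close> we have \<open>\<phi>\<^sub>g = \<tau>\<^sup>R + \<dots> + (\<alpha>\<^sup>R - c)\<close>, and the constant
  term is nonzero: otherwise \<open>\<alpha>\<close> would be a root of \<open>g\<close>, a divisor of \<open>P - 1\<close>, so \<open>P(\<alpha>) = 1\<close>.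
  The torsion points are the roots of the q-linearized polynomial \<open>\<Sum>\<^sub>i b\<^sub>i x^(q^i)\<close>
  attached to \<open>\<phi>\<^sub>g = \<Sum>\<^sub>i b\<^sub>i \<tau>\<^sup>i\<close>; its formal derivative is the nonzero constant \<open>b\<^sub>0\<close>, so it has
  \<open>q\<^sup>R\<close> distinct roots. Since \<open>x \<mapsto> x\<^sup>q\<close> is additive and fixes \<open>\<bbbF>\<^sub>q\<close>, the roots form an
  \<open>\<bbbF>\<^sub>q\<close>-vector space, which therefore has dimension \<open>R\<close>.
\<close>

lemma power_card_eq_self:
  fixes x :: "'a::{finite,field}"
  shows "x ^ CARD('a) = x"
proof (cases "x = 0")
  case False
  define F where "F = (ring_of_type_algebra :: 'a ring)"
  interpret F: field F unfolding F_def by rule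
  have F_pow: "y [^]\<^bsub>F\<^esub> n = y ^ n" for y n
    by (induction n) (simp_all add: F_def ring_of_type_algebra_def)
  have units: "Units F = UNIV - {0}"
    by (simp add: F.field_Units) (simp add: F_def ring_of_type_algebra_def)
  have "x ^ (CARD('a) - 1) = 1"
    using F.units_power_order_eq_one[of x] False
    by (simp add: units F_pow card_Diff_singleton) (simp add: F_def ring_of_type_algebra_def)
  then have "x * x ^ (CARD('a) - 1) = x" by simp
  then show ?thesis
    by (metis power_Suc Suc_diff_1 finite_UNIV_card_ge_0 finite)
qed (simp add: power_0_left)

lemma card_finite_field_ge_2: "CARD('a::{finite,field}) \<ge> 2"
proof -
  have "card {0::'a, 1} \<le> CARD('a)" by (rule card_mono) simp_all
  then show ?thesis by simp
qed

lemma binomial_card_finite_field_eq_0: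
  assumes "0 < j" "j < CARD('a::{finite,field})"
  shows "of_nat (CARD('a) choose j) = (0::'a)"
proof -
  let ?q = "CARD('a)"
  \<comment> \<open>\<open>(X + 1)\<^sup>q - X\<^sup>q - 1\<close> has degree below \<open>q\<close> but vanishes on all \<open>q\<close> field elements.\<close>
  define f :: "'a poly" where "f = [:1, 1:] ^ ?q - monom 1 ?q - 1"
  have coeff_f: "coeff f k = of_nat (?q choose k) - (if k = ?q then 1 else 0) - (if k = 0 then 1 else 0)"
    if "k \<le> ?q" for k
    using that by (simp add: f_def coeff_linear_poly_power coeff_monom)
  have "degree f \<le> ?q"
    unfolding f_def by (intro degree_diff_le degree_power_le[THEN order.trans]) (auto simp: degree_monom_le)
  moreover have "coeff f ?q = 0"
    using coeff_f[of ?q] card_finite_field_ge_2[where 'a='a] by simp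
  moreover have "poly f x = 0" for x
    by (simp add: f_def poly_monom power_card_eq_self)
  ultimately have "f = 0"
    by (intro poly_eqI_degree_lead_coeff[of f ?q 0 UNIV]) simp_all
  then show ?thesis using coeff_f[of j] assms by simp
qed

lemma add_power_eq_if_binomials_vanish:
  fixes x y :: "'a::comm_semiring_1"
  assumes "n > 0" and "\<And>j. 0 < j \<Longrightarrow> j < n \<Longrightarrow> of_nat (n choose j) = (0::'a)"
  shows "(x + y) ^ n = x ^ n + y ^ n"
proof -
  have "(x + y) ^ n = (\<Sum>k\<le>n. of_nat (n choose k) * x ^ k * y ^ (n - k))"
    by (rule binomial_ring)
  also have "\<dots> = (\<Sum>k\<in>{0, n}. of_nat (n choose k) * x ^ k * y ^ (n - k))"
    using assms(2) by (intro sum.mono_neutral_right) auto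
  also have "\<dots> = x ^ n + y ^ n"
    using assms(1) by (simp add: add.commute)
  finally show ?thesis .
qed

lemma add_power_power_eq_if_binomials_vanish:
  fixes x y :: "'a::comm_semiring_1"
  assumes "n > 0" and "\<And>j. 0 < j \<Longrightarrow> j < n \<Longrightarrow> of_nat (n choose j) = (0::'a)"
  shows "(x + y) ^ (n ^ i) = x ^ (n ^ i) + y ^ (n ^ i)"
proof (induction i arbitrary: x y)
  case (Suc i)
  then show ?case
    using add_power_eq_if_binomials_vanish[OF assms] by (simp add: power_mult)
qed simp

lemma binomial_card_alg_closure_eq_0:
  assumes "0 < j" and "j < CARD('q::{finite,field})"
  shows "of_nat (CARD('q) choose j) = (0 :: 'q alg_closure)"
proof -
  have "to_ac (of_nat (CARD('q) choose j) :: 'q) = 0"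
    using assms by (simp only: binomial_card_finite_field_eq_0 to_ac_0)
  then show ?thesis by simp
qed

lemma alg_closure_add_power_card:
  fixes x y :: "'q::{finite,field} alg_closure"
  shows "(x + y) ^ (CARD('q) ^ i) = x ^ (CARD('q) ^ i) + y ^ (CARD('q) ^ i)"
  by (intro add_power_power_eq_if_binomials_vanish binomial_card_alg_closure_eq_0) simp_all

lemma to_ac_power_card_power:
  "to_ac (c :: 'q::{finite,field}) ^ (CARD('q) ^ i) = to_ac c"
  by (induction i) (simp_all add: power_mult power_card_eq_self flip: to_ac_power)

lemma lin_eval_add:
  fixes f :: "'q::{finite,field} alg_closure poly"
  shows "lin_eval CARD('q) f (x + y) = lin_eval CARD('q) f x + lin_eval CARD('q) f y"
  by (simp add: lin_eval_def alg_closure_add_power_card distrib_left sum.distrib)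

lemma lin_eval_to_ac_mult:
  fixes f :: "'q::{finite,field} alg_closure poly"
  shows "lin_eval CARD('q) f (to_ac c * x) = to_ac c * lin_eval CARD('q) f x"
  by (simp add: lin_eval_def power_mult_distrib to_ac_power_card_power sum_distrib_left mult.left_commute)

lemma rsquarefreeI_pderiv:
  fixes p :: "'a::field poly"
  assumes "p \<noteq> 0" and "\<And>x. poly p x = 0 \<Longrightarrow> poly (pderiv p) x \<noteq> 0"
  shows "rsquarefree p"
  unfolding rsquarefree_def
proof (intro conjI allI assms(1))
  fix a
  show "order a p = 0 \<or> order a p = 1"
  proof (rule ccontr)
    assume "\<not> (order a p = 0 \<or> order a p = 1)"
    then have "2 \<le> order a p" by linarith
    then have "[:-a, 1:] ^ 2 dvd p"
      using order_1[of a p] le_imp_power_dvd dvd_trans by blast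
    then obtain h where "p = [:-a, 1:] ^ 2 * h" ..
    then have "poly p a = 0" and "poly (pderiv p) a = 0"
      by (simp_all only: poly_mult pderiv_mult poly_add power2_eq_square) simp_all
    with assms(2) show False by blast
  qed
qed

lemma card_roots_rsquarefree:
  fixes p :: "'a::alg_closed_field poly"
  assumes "rsquarefree p"
  shows "card {x. poly p x = 0} = degree p"
proof -
  have p0: "p \<noteq> 0" using assms by (simp add: rsquarefree_def)
  obtain A where size_A: "size A = degree p"
    and p_eq: "p = smult (lead_coeff p) (\<Prod>x\<in>#A. [:-x, 1:])"
    using alg_closed_imp_factorization[OF p0] by blast
  have "proots (\<Prod>x\<in>#A. [:-x, 1:]) = A"
  proof (induction A)
    case (add x A)
    have "(\<Prod>y\<in>#A. [:-y, 1:]) \<noteq> 0"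
      by auto
    then show ?case
      using add.IH by (simp add: proots_mult del: mult_pCons_left)
  qed simp
  then have "degree p = size (proots p)"
    using p0 size_A by (subst p_eq) simp
  also have "\<dots> = (\<Sum>x\<in>{x. poly p x = 0}. count (proots p) x)"
    using p0 by (simp add: size_multiset_overloaded_eq)
  also have "\<dots> = card {x. poly p x = 0}"
    using assms p0 by (simp add: rsquarefree_root_order)
  finally show ?thesis ..
qed

definition linearized :: "nat \<Rightarrow> 'a::comm_ring_1 poly \<Rightarrow> 'a poly" where
  "linearized q f = (\<Sum>i\<le>degree f. monom (coeff f i) (q ^ i))"

lemma poly_linearized: "poly (linearized q f) x = lin_eval q f x"
  by (simp add: linearized_def lin_eval_def poly_sum poly_monom)

lemma degree_linearized:
  assumes "q > 1" and "f \<noteq> 0"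
  shows "degree (linearized q f) = q ^ degree f"
proof (rule antisym)
  show "degree (linearized q f) \<le> q ^ degree f"
    unfolding linearized_def using assms(1)
    by (intro degree_sum_le degree_monom_le[THEN order.trans] power_increasing) auto
  have "coeff (linearized q f) (q ^ degree f) = (\<Sum>i\<le>degree f. if i = degree f then coeff f i else 0)"
    unfolding linearized_def coeff_sum coeff_monom using power_inject_exp[OF assms(1)]
    by (intro sum.cong) auto
  also have "\<dots> = lead_coeff f" by simp
  finally show "q ^ degree f \<le> degree (linearized q f)"
    using assms(2) by (intro le_degree) simp
qed

lemma pderiv_linearized:
  assumes "of_nat q = (0::'a::idom)"
  shows "pderiv (linearized q f :: 'a poly) = [:coeff f 0:]"
proof -
  have "pderiv (linearized q f) = (\<Sum>i\<le>degree f. if i = 0 then [:coeff f 0:] else 0)"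
    unfolding linearized_def higher_pderiv_sum[where n = 1, simplified]
    using assms by (intro sum.cong) (auto simp: pderiv_monom of_nat_power monom_0)
  then show ?thesis by simp
qed

lemma card_roots_lin_eval:
  fixes f :: "'a::alg_closed_field poly"
  assumes "q > 1" and "of_nat q = (0::'a)" and "coeff f 0 \<noteq> 0"
  shows "card {x. lin_eval q f x = 0} = q ^ degree f"
proof -
  have "linearized q f \<noteq> 0"
    using pderiv_linearized[OF assms(2), of f] assms(3) by auto
  then have "rsquarefree (linearized q f)"
    using assms(3) by (intro rsquarefreeI_pderiv) (simp_all add: pderiv_linearized[OF assms(2)])
  then have "card {x. poly (linearized q f) x = 0} = degree (linearized q f)"
    by (rule card_roots_rsquarefree)
  moreover have "f \<noteq> 0" using assms(3) by auto
  ultimately show ?thesis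
    using assms(1) by (simp add: poly_linearized degree_linearized)
qed

lemma (in vector_space) card_span_independent:
  assumes "finite (UNIV :: 'a set)" and "finite B" and "independent B"
  shows "card (span B) = CARD('a) ^ card B"
proof -
  let ?comb = "\<lambda>u. \<Sum>v\<in>B. u v *s v"
  have "span B = ?comb ` (B \<rightarrow>\<^sub>E UNIV)"
  proof (intro equalityI subsetI)
    fix x assume "x \<in> span B"
    then obtain u where "x = ?comb u"
      unfolding span_finite[OF assms(2)] by blast
    also have "\<dots> = ?comb (restrict u B)"
      by (intro sum.cong) auto
    finally show "x \<in> ?comb ` (B \<rightarrow>\<^sub>E UNIV)"
      by (rule image_eqI[where x = "restrict u B"]) simp_all
  qed (auto simp: span_finite[OF assms(2)])
  moreover have "inj_on ?comb (B \<rightarrow>\<^sub>E UNIV)"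
  proof (rule inj_onI)
    fix u w assume u: "u \<in> B \<rightarrow>\<^sub>E UNIV" and w: "w \<in> B \<rightarrow>\<^sub>E UNIV" and "?comb u = ?comb w"
    then have "(\<Sum>v\<in>B. (u v - w v) *s v) = 0"
      by (simp add: scale_left_diff_distrib sum_subtractf)
    then have "u v = w v" if "v \<in> B" for v
      using independentD[OF assms(3,2) order_refl, of "\<lambda>v. u v - w v"] that by simp
    with u w show "u = w"
      by (intro PiE_ext) auto
  qed
  ultimately show ?thesis
    using assms(2) by (simp add: card_image card_PiE)
qed

interpretation fq: vector_space "\<lambda>(c::'q::{finite,field}) (x::'q alg_closure). to_ac c * x"
  by unfold_locales (simp_all add: algebra_simps)

lemma fq_dim_eq_if_subspace:
  fixes V :: "'q::{finite,field} alg_closure set"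
  assumes "fq.subspace V" and "finite V" and "card V = CARD('q) ^ n"
  shows "fq_dim_eq V n"
proof -
  obtain B where "B \<subseteq> V" and indep: "fq.independent B" and "V \<subseteq> fq.span B"
    by (rule fq.basis_exists)
  then have span: "fq.span B = V" and fin: "finite B"
    using assms(1,2) fq.span_subspace finite_subset by blast+
  have "CARD('q) ^ card B = CARD('q) ^ n"
    using fq.card_span_independent[OF _ fin indep] span assms(3) by simp
  then have "card B = n"
    using card_finite_field_ge_2[where 'a='q] by simp
  moreover have "fq_indep B"
    unfolding fq_indep_def
  proof (intro allI impI ballI)
    fix c :: "'q alg_closure \<Rightarrow> 'q" and b
    assume "(\<Sum>b\<in>B. to_ac (c b) * b) = 0" and "b \<in> B"
    then show "c b = 0"
      by (rule fq.independentD[OF indep fin order_refl])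
  qed
  moreover have "fq_span B = fq.span B"
    unfolding fq_span_def fq.span_finite[OF fin] by blast
  ultimately show ?thesis
    unfolding fq_dim_eq_def using fin span by blast
qed

lemma fq_subspace_lin_eval_kernel:
  fixes f :: "'q::{finite,field} alg_closure poly"
  shows "fq.subspace {\<beta>. lin_eval CARD('q) f \<beta> = 0}"
  unfolding fq.subspace_def
  by (simp add: lin_eval_add lin_eval_to_ac_mult) (simp add: lin_eval_def power_0_left)

lemma tw_mult_linear:
  fixes \<alpha> :: "'a::comm_ring_1"
  assumes "q > 0"
  shows "tw_mult q [:\<alpha>, 1:] f = smult \<alpha> f + pCons 0 (map_poly (\<lambda>x. x ^ q) f)"
proof -
  have "tw_mult q [:\<alpha>, 1:] f =
      (\<Sum>j\<le>degree f. monom (\<alpha> * coeff f j) j) + (\<Sum>j\<le>degree f. monom (coeff f j ^ q) (Suc j))"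
    by (simp add: tw_mult_def atMost_Suc)
  also have "(\<Sum>j\<le>degree f. monom (\<alpha> * coeff f j) j) = smult \<alpha> f"
    by (rule poly_eqI) (auto simp: coeff_sum coeff_eq_0 not_le)
  also have "(\<Sum>j\<le>degree f. monom (coeff f j ^ q) (Suc j)) = pCons 0 (map_poly (\<lambda>x. x ^ q) f)"
    using assms by (intro poly_eqI)
      (auto simp: coeff_sum coeff_pCons coeff_map_poly coeff_eq_0 not_le power_0_left split: nat.split)
  finally show ?thesis .
qed

lemma tw_pow_0 [simp]: "tw_pow q f 0 = 1"
  by (simp add: tw_pow_def)

lemma tw_pow_Suc: "tw_pow q f (Suc k) = tw_mult q f (tw_pow q f k)"
  by (simp add: tw_pow_def)

lemma coeff_0_tw_pow_linear:
  fixes \<alpha> :: "'a::comm_ring_1"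
  assumes "q > 0"
  shows "coeff (tw_pow q [:\<alpha>, 1:] k) 0 = \<alpha> ^ k"
  by (induction k) (simp_all add: tw_pow_Suc tw_mult_linear[OF assms])

lemma degree_lead_coeff_tw_pow_linear:
  fixes \<alpha> :: "'a::comm_ring_1"
  assumes "q > 0"
  shows "degree (tw_pow q [:\<alpha>, 1:] k) = k \<and> lead_coeff (tw_pow q [:\<alpha>, 1:] k) = 1"
proof (induction k)
  case (Suc k)
  let ?T = "tw_pow q [:\<alpha>, 1:] k"
  have deg: "degree ?T = k" and lead: "coeff ?T k = 1"
    using Suc.IH by auto
  have "degree (map_poly (\<lambda>x. x ^ q) ?T) = k"
    using deg lead by (subst map_poly_degree_eq) auto
  moreover have "coeff (map_poly (\<lambda>x. x ^ q) ?T) k = 1"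
    using lead assms by (simp add: coeff_map_poly power_0_left)
  ultimately have "degree (pCons 0 (map_poly (\<lambda>x. x ^ q) ?T)) = Suc k"
    and "coeff (pCons 0 (map_poly (\<lambda>x. x ^ q) ?T)) (Suc k) = 1"
    by auto
  moreover have "degree (smult \<alpha> ?T) < Suc k"
    using deg degree_smult_le[of \<alpha> ?T] by linarith
  ultimately show ?case
    using deg by (simp add: tw_pow_Suc tw_mult_linear[OF assms] degree_add_eq_right coeff_eq_0)
qed simp

lemma drinfeld_phi_eq_sum:
  fixes a :: "'q::{finite,field} poly"
  assumes "degree a \<le> n"
  shows "drinfeld_phi \<phi>T a = (\<Sum>k\<le>n. smult (to_ac (coeff a k)) (tw_pow CARD('q) \<phi>T k))"
  unfolding drinfeld_phi_def using assms by (intro sum.mono_neutral_left) (auto simp: coeff_eq_0)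

lemma drinfeld_phi_diff:
  fixes a b :: "'q::{finite,field} poly"
  shows "drinfeld_phi \<phi>T (a - b) = drinfeld_phi \<phi>T a - drinfeld_phi \<phi>T b"
proof -
  let ?n = "max (degree a) (degree b)"
  have "degree (a - b) \<le> ?n"
    by (rule degree_diff_le_max)
  then show ?thesis
    by (simp add: drinfeld_phi_eq_sum[of _ ?n] sum_subtractf smult_diff_left)
qed

lemma drinfeld_phi_monom:
  fixes c :: "'q::{finite,field}"
  shows "drinfeld_phi \<phi>T (monom c k) = smult (to_ac c) (tw_pow CARD('q) \<phi>T k)"
proof -
  have "(\<Sum>j\<le>k. smult (to_ac (coeff (monom c k) j)) (tw_pow CARD('q) \<phi>T j))
      = (\<Sum>j\<le>k. if j = k then smult (to_ac c) (tw_pow CARD('q) \<phi>T j) else 0)"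
    by (intro sum.cong) auto
  then show ?thesis
    by (simp add: drinfeld_phi_eq_sum[OF degree_monom_le])
qed

lemma drinfeld_phi_carlitz_reduction:
  fixes \<alpha> :: "'q::{finite,field} alg_closure"
  assumes "R > 0"
  shows "coeff (drinfeld_phi [:\<alpha>, 1:] (monom 1 R - [:c:] :: 'q poly)) 0 = \<alpha> ^ R - to_ac c"
    and "degree (drinfeld_phi [:\<alpha>, 1:] (monom 1 R - [:c:] :: 'q poly)) = R"
proof -
  have q: "CARD('q) > 0" by simp
  have phi: "drinfeld_phi [:\<alpha>, 1:] (monom 1 R - [:c:] :: 'q poly) = tw_pow CARD('q) [:\<alpha>, 1:] R - [:to_ac c:]"
    by (simp add: drinfeld_phi_diff drinfeld_phi_monom flip: monom_0)
  show "coeff (drinfeld_phi [:\<alpha>, 1:] (monom 1 R - [:c:] :: 'q poly)) 0 = \<alpha> ^ R - to_ac c"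
    unfolding phi by (simp add: coeff_0_tw_pow_linear[OF q])
  show "degree (drinfeld_phi [:\<alpha>, 1:] (monom 1 R - [:c:] :: 'q poly)) = R"
    unfolding phi using degree_lead_coeff_tw_pow_linear[OF q, of \<alpha> R] assms
    by (subst diff_conv_add_uminus, subst degree_add_eq_left) auto
qed

lemma fq_dim_eq_torsion:
  fixes \<phi>T :: "'q::{finite,field} alg_closure poly"
  assumes "coeff (drinfeld_phi \<phi>T a) 0 \<noteq> 0"
  shows "fq_dim_eq (torsion \<phi>T a) (degree (drinfeld_phi \<phi>T a))"
proof -
  have "of_nat CARD('q) = (of_nat (CARD('q) choose 1) :: 'q alg_closure)"
    by simp
  also have "\<dots> = 0"
    using card_finite_field_ge_2[where 'a='q] by (intro binomial_card_alg_closure_eq_0) auto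
  finally have "card (torsion \<phi>T a) = CARD('q) ^ degree (drinfeld_phi \<phi>T a)"
    unfolding torsion_def using card_finite_field_ge_2[where 'a='q] assms
    by (intro card_roots_lin_eval) auto
  then show ?thesis
    unfolding torsion_def
    by (intro fq_dim_eq_if_subspace fq_subspace_lin_eval_kernel card_ge_0_finite) auto
qed

lemma map_poly_to_ac_mult:
  "map_poly to_ac (p * q) = map_poly to_ac p * map_poly to_ac (q :: 'a::field poly)"
  by (rule poly_eqI) (simp add: coeff_map_poly coeff_mult to_ac_sum)

lemma map_poly_to_ac_diff:
  "map_poly to_ac (p - q) = map_poly to_ac p - map_poly to_ac (q :: 'a::field poly)"
  by (rule poly_eqI) (simp add: coeff_map_poly)

lemma poly_to_ac_neq_0_if_dvd_pred:
  fixes P g :: "'a::field poly"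
  assumes "poly (map_poly to_ac P) \<alpha> = 0" and "g dvd P - 1"
  shows "poly (map_poly to_ac g) \<alpha> \<noteq> 0"
proof
  assume root: "poly (map_poly to_ac g) \<alpha> = 0"
  obtain k where "P - 1 = g * k"
    using assms(2) ..
  then have "poly (map_poly to_ac (P - 1)) \<alpha> = 0"
    using root by (simp add: map_poly_to_ac_mult)
  with assms(1) show False
    by (simp add: map_poly_to_ac_diff)
qed

theorem lemma3p2:
  fixes r \<delta> R l m :: nat
    and a :: "nat \<Rightarrow> 'q::{finite,field}"
    and P h :: "'q poly"
    and \<alpha> :: "'q alg_closure"
  assumes "r \<ge> 1" and "\<delta> \<ge> 2" and "R = r + \<delta> - 1"
    and "\<forall>i<l. a i \<noteq> 0"
    and "h = (\<Prod>i<l. monom 1 R - [:a i:])"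
    and "lead_coeff P = 1" and "irreducible P" and "degree P = m"
    and "h dvd P - 1"
    and "poly (map_poly to_ac P) \<alpha> = 0"
  shows "\<forall>i<l. fq_dim_eq (torsion [:\<alpha>, 1:] (monom 1 R - [:a i:])) R"
proof (intro allI impI)
  fix i assume "i < l"
  let ?g = "monom 1 R - [:a i:]"
  have "R > 0" using assms(1-3) by simp
  have "?g dvd P - 1"
    using assms(5,9) \<open>i < l\<close> by (metis dvd_prodI dvd_trans finite_lessThan lessThan_iff)
  then have "poly (map_poly to_ac ?g) \<alpha> \<noteq> 0"
    using assms(10) by (rule poly_to_ac_neq_0_if_dvd_pred[rotated])
  then have "\<alpha> ^ R - to_ac (a i) \<noteq> 0"
    by (simp add: map_poly_to_ac_diff map_poly_monom map_poly_pCons poly_monom)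
  then show "fq_dim_eq (torsion [:\<alpha>, 1:] ?g) R"
    using fq_dim_eq_torsion drinfeld_phi_carlitz_reduction[OF \<open>R > 0\<close>] by metis
qed

end
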